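(* For every $q\in X^*\setminus\{e\}$: $Q_q=P_q^*\cdot q\cup\{e\}\subseteq P_q^*$, and $\mathrm{pref}(P_q^* )=\mathrm{pref}(Q_q)=P_q^*\cdot\mathrm{pref}(q)$.
   Context: $X$ is a finite alphabet with $|X|\ge 2$; $X^*$ the finite words (empty word $e$). $w\sqsubseteq\eta$ means $w$ is a prefix of $\eta$, $w\sqsubset\eta$ a proper prefix. For languages $L$, $L^*=\bigcup_{i\in\mathbb{N}}L^i$; concatenation extends to sets. $\mathrm{pref}(B)$ is the set of finite prefixes of elements of $B$. A word $\eta$ is quasiperiodic with quasiperiod $q\in X^*\setminus\{e\}$ if for every natural number $j<|\eta|$ there is a prefix $u_j\sqsubseteq\eta$ with $j-|q|<|u_j|\le j$ and $u_j\cdot q\sqsubseteq\eta$. $Q_q$ is the set of finite words quasiperiodic with quasiperiod $q$ (including $e$). $P_q:=\{v: e\sqsubset v\sqsubseteq q\sqsubset v\cdot q\}$. *)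

theory Defs
  imports Main "HOL-Library.Sublist" "HOL-Library.Cardinality"
begin

text \<open>Finite words over the alphabet 'a are lists; the empty word e is [].
  prefix w eta is the prefix relation, strict_prefix the proper prefix relation.\<close>

definition conc :: "'a list set \<Rightarrow> 'a list set \<Rightarrow> 'a list set" where
  "conc A B = {u @ v | u v. u \<in> A \<and> v \<in> B}"

fun lpow :: "'a list set \<Rightarrow> nat \<Rightarrow> 'a list set" where
  "lpow A 0 = {[]}"
| "lpow A (Suc n) = conc A (lpow A n)"

definition lstar :: "'a list set \<Rightarrow> 'a list set" where
  "lstar A = (\<Union>i. lpow A i)"

definition pref :: "'a list set \<Rightarrow> 'a list set" where
  "pref B = {w. \<exists>eta\<in>B. prefix w eta}"

definition quasiperiodic :: "'a list \<Rightarrow> 'a list \<Rightarrow> bool" where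
  "quasiperiodic eta q \<longleftrightarrow> q \<noteq> [] \<and>
     (\<forall>j::nat. j < length eta \<longrightarrow>
        (\<exists>u. prefix u eta \<and> int j - int (length q) < int (length u) \<and> length u \<le> j
             \<and> prefix (u @ q) eta))"

definition Qset :: "'a list \<Rightarrow> 'a list set" where
  "Qset q = {eta. quasiperiodic eta q}"

definition Pset :: "'a list \<Rightarrow> 'a list set" where
  "Pset q = {v. strict_prefix [] v \<and> prefix v q \<and> strict_prefix q (v @ q)}"

end

theory Submission
  imports Defs
begin

(* Write P = Pset q.  Every v in P is a nonempty prefix of q that is
   a period of q (q is a prefix of v q), so q is itself in P.
   (1) Prepending a word of P to a nonempty q-quasiperiodic word keeps it
       q-quasiperiodic; by star induction every x q with x in P* is in Q_q.
   (2) Conversely, in a q-quasiperiodic word longer than q, position |q| is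
       covered by an occurrence of q starting at some 0 < |u| <= |q|; then u is
       in P and the remainder is again q-quasiperiodic, so by length induction
       Q_q = P* q + {e}.
   (3) Since q is in P, P* q + {e} is contained in P*.
   (4) A prefix of a word of P* is, by star induction, in P* pref(q).
   The prefix identities then follow from (1)-(4) by set inclusions. *)

lemma lstar_Nil: "[] \<in> lstar A"
  unfolding lstar_def using lpow.simps(1) by blast

lemma lstar_prepend: "a \<in> A \<Longrightarrow> x \<in> lstar A \<Longrightarrow> a @ x \<in> lstar A"
proof -
  assume "a \<in> A" "x \<in> lstar A"
  then obtain n where "x \<in> lpow A n" unfolding lstar_def by blast
  with \<open>a \<in> A\<close> have "a @ x \<in> lpow A (Suc n)" by (auto simp: conc_def)
  then show ?thesis unfolding lstar_def by blast
qed

lemma lstar_induct [consumes 1, case_names Nil prepend]: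
  assumes "x \<in> lstar A"
    and Nil: "P []"
    and prepend: "\<And>a y. a \<in> A \<Longrightarrow> y \<in> lstar A \<Longrightarrow> P y \<Longrightarrow> P (a @ y)"
  shows "P x"
proof -
  have "y \<in> lstar A \<and> P y" if "y \<in> lpow A n" for y n
    using that
  proof (induction n arbitrary: y)
    case 0
    then show ?case using Nil lstar_Nil by simp
  next
    case (Suc n)
    then obtain a z where "y = a @ z" "a \<in> A" "z \<in> lpow A n" by (auto simp: conc_def)
    with Suc.IH show ?case using prepend lstar_prepend by blast
  qed
  with assms(1) show ?thesis unfolding lstar_def by blast
qed

lemma lstar_single: "a \<in> A \<Longrightarrow> a \<in> lstar A"
  using lstar_prepend[OF _ lstar_Nil] by fastforce

lemma lstar_append: "x \<in> lstar A \<Longrightarrow> y \<in> lstar A \<Longrightarrow> x @ y \<in> lstar A"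
  by (induction x rule: lstar_induct) (auto intro: lstar_prepend)

lemma Pset_iff: "v \<in> Pset q \<longleftrightarrow> v \<noteq> [] \<and> prefix v q \<and> prefix q (v @ q)"
  unfolding Pset_def strict_prefix_def by auto

lemma self_in_Pset: "q \<noteq> [] \<Longrightarrow> q \<in> Pset q"
  by (simp add: Pset_iff)

lemma Pset_prepend_prefix: "a \<in> Pset q \<Longrightarrow> prefix q eta \<Longrightarrow> prefix q (a @ eta)"
  by (metis Pset_iff prefix_order.trans same_prefix_prefix)

text \<open>A reformulation without integer arithmetic: position j is covered by an
  occurrence of q starting at |u|.\<close>

lemma quasiperiodic_iff:
  "quasiperiodic eta q \<longleftrightarrow> q \<noteq> [] \<and>
     (\<forall>j < length eta. \<exists>u. j < length u + length q \<and> length u \<le> j \<and> prefix (u @ q) eta)"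
proof -
  have bound: "int j - int (length q) < int (length u) \<longleftrightarrow> j < length u + length q"
    for j :: nat and u :: "'a list" by linarith
  show ?thesis unfolding quasiperiodic_def bound by (auto dest: append_prefixD)
qed

lemma quasiperiodic_Nil: "q \<noteq> [] \<Longrightarrow> quasiperiodic [] q"
  by (simp add: quasiperiodic_iff)

text \<open>A nonempty quasiperiodic word starts with its quasiperiod (cover position 0).\<close>

lemma quasiperiodic_prefix:
  assumes "quasiperiodic eta q" "eta \<noteq> []"
  shows "prefix q eta"
  using assms unfolding quasiperiodic_iff by force

lemma quasiperiodic_self: "q \<noteq> [] \<Longrightarrow> quasiperiodic q q"
  unfolding quasiperiodic_iff by (auto intro: exI[of _ "[]"])

text \<open>Step (1): prepending a period preserves quasiperiodicity.  Positions
  inside a are covered by the occurrence of q at 0, the others by shifted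
  occurrences in eta.\<close>

lemma quasiperiodic_prepend:
  assumes a: "a \<in> Pset q" and qp: "quasiperiodic eta q" and ne: "eta \<noteq> []"
  shows "quasiperiodic (a @ eta) q"
  unfolding quasiperiodic_iff
proof (intro conjI allI impI)
  show "q \<noteq> []" using qp by (simp add: quasiperiodic_iff)
  fix j assume j: "j < length (a @ eta)"
  show "\<exists>u. j < length u + length q \<and> length u \<le> j \<and> prefix (u @ q) (a @ eta)"
  proof (cases "j < length a")
    case True
    have "length a \<le> length q" using a by (simp add: Pset_iff prefix_length_le)
    moreover have "prefix q (a @ eta)"
      using Pset_prepend_prefix[OF a quasiperiodic_prefix[OF qp ne]] .
    ultimately show ?thesis using True by (intro exI[of _ "[]"]) simp
  next
    case False
    then have "j - length a < length eta" using j by simp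
    then obtain u where u: "j - length a < length u + length q" "length u \<le> j - length a"
        "prefix (u @ q) eta"
      using qp unfolding quasiperiodic_iff by blast
    have "j < length (a @ u) + length q" "length (a @ u) \<le> j" using u(1,2) False by auto
    moreover have "prefix ((a @ u) @ q) (a @ eta)" using u(3) by simp
    ultimately show ?thesis by (intro exI[of _ "a @ u"] conjI)
  qed
qed

lemma lstar_Pset_quasiperiodic:
  assumes "x \<in> lstar (Pset q)" "q \<noteq> []"
  shows "quasiperiodic (x @ q) q"
  using assms(1)
proof (induction x rule: lstar_induct)
  case Nil
  then show ?case using quasiperiodic_self[OF assms(2)] by simp
next
  case (prepend a y)
  have "quasiperiodic (a @ (y @ q)) q"
    using quasiperiodic_prepend[OF prepend.hyps(1) prepend.IH] assms(2) by simp
  then show ?case by simp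
qed

text \<open>The occurrence of q
  covering position |q| starts at some 0 < |u| <= |q|; u is the period.\<close>

lemma quasiperiodic_split:
  assumes qp: "quasiperiodic eta q" and long: "length q < length eta"
  obtains u eta' where "u \<in> Pset q" "eta = u @ eta'" "eta' \<noteq> []" "quasiperiodic eta' q"
proof -
  have q: "q \<noteq> []" using qp by (simp add: quasiperiodic_iff)
  have pq: "prefix q eta" using quasiperiodic_prefix[OF qp] long by force
  obtain u where u: "length q < length u + length q" "length u \<le> length q" "prefix (u @ q) eta"
    using qp long unfolding quasiperiodic_iff by blast
  have "prefix u q" using prefix_length_prefix[OF append_prefixD[OF u(3)] pq u(2)] .
  moreover have "prefix q (u @ q)" using prefix_length_prefix[OF pq u(3)] by simp
  ultimately have uP: "u \<in> Pset q" using u(1) by (simp add: Pset_iff)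
  obtain eta' where eta: "eta = u @ eta'" using prefixE[OF append_prefixD[OF u(3)]] .
  have pq': "prefix q eta'" using u(3) eta by simp
  have "quasiperiodic eta' q"
    unfolding quasiperiodic_iff
  proof (intro conjI allI impI)
    show "q \<noteq> []" by (fact q)
    fix j assume "j < length eta'"
    then have "j + length u < length eta" using eta by simp
    then obtain w where w: "j + length u < length w + length q" "length w \<le> j + length u"
        "prefix (w @ q) eta"
      using qp unfolding quasiperiodic_iff by blast
    show "\<exists>v. j < length v + length q \<and> length v \<le> j \<and> prefix (v @ q) eta'"
    proof (cases "length u \<le> length w")
      case True
      have "prefix u w"
        using prefix_length_prefix[OF append_prefixD[OF u(3)] append_prefixD[OF w(3)] True] .
      then obtain v where v: "w = u @ v" by (rule prefixE)
      have "prefix (v @ q) eta'" using w(3) unfolding v eta by simp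
      with w show ?thesis unfolding v by (intro exI[of _ v]) simp
    next
      case False
      with w show ?thesis using pq' by (intro exI[of _ "[]"]) simp
    qed
  qed
  moreover have "eta' \<noteq> []" using long eta u(2) by auto
  ultimately show thesis using that uP eta by blast
qed

lemma quasiperiodic_decomp:
  assumes "quasiperiodic eta q" "eta \<noteq> []"
  shows "\<exists>x \<in> lstar (Pset q). eta = x @ q"
  using assms
proof (induction "length eta" arbitrary: eta rule: less_induct)
  case less
  show ?case
  proof (cases "length q < length eta")
    case False
    with quasiperiodic_prefix[OF less.prems] have "eta = q" by (auto simp: prefix_def)
    then show ?thesis using lstar_Nil by fastforce
  next
    case True
    then obtain u eta' where u: "u \<in> Pset q" and eta: "eta = u @ eta'"
      and rest: "eta' \<noteq> []" "quasiperiodic eta' q"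
      using quasiperiodic_split less.prems(1) by blast
    have "length eta' < length eta" using u eta by (simp add: Pset_iff)
    then obtain x where "x \<in> lstar (Pset q)" "eta' = x @ q" using less.hyps rest by blast
    then have "u @ x \<in> lstar (Pset q)" "eta = (u @ x) @ q" using u eta lstar_prepend by auto
    then show ?thesis by blast
  qed
qed

lemma Qset_eq: "q \<noteq> [] \<Longrightarrow> Qset q = conc (lstar (Pset q)) {q} \<union> {[]}"
  unfolding Qset_def conc_def
  using quasiperiodic_decomp lstar_Pset_quasiperiodic quasiperiodic_Nil by fastforce

text \<open>Step (4): a prefix of a product of periods is a product of periods followed
  by a prefix of q, since every period is itself a prefix of q.\<close>

lemma prefix_lstar_Pset:
  assumes "x \<in> lstar (Pset q)" "prefix w x"
  shows "w \<in> conc (lstar (Pset q)) (pref {q})"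
  using assms
proof (induction x arbitrary: w rule: lstar_induct)
  case Nil
  then show ?case using lstar_Nil by (auto simp: conc_def pref_def)
next
  case (prepend a y)
  consider "prefix w a" | us where "w = a @ us" "prefix us y"
    using prepend.prems by (auto simp: prefix_append)
  then show ?case
  proof cases
    case 1
    then have "prefix w q" using prepend.hyps(1) Pset_iff prefix_order.trans by blast
    then show ?thesis unfolding conc_def pref_def using lstar_Nil by force
  next
    case 2
    then have "us \<in> conc (lstar (Pset q)) (pref {q})" using prepend.IH by blast
    then obtain z r where "us = z @ r" "z \<in> lstar (Pset q)" "r \<in> pref {q}"
      by (auto simp: conc_def)
    then have "w = (a @ z) @ r" "a @ z \<in> lstar (Pset q)"
      using 2 prepend.hyps(1) lstar_prepend by auto
    with \<open>r \<in> pref {q}\<close> show ?thesis unfolding conc_def by blast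
  qed
qed

theorem proposition1:
  fixes q :: "'a::finite list"
  assumes "CARD('a) \<ge> 2"
    and "q \<noteq> []"
  shows "Qset q = conc (lstar (Pset q)) {q} \<union> {[]}
     \<and> conc (lstar (Pset q)) {q} \<union> {[]} \<subseteq> lstar (Pset q)
     \<and> pref (lstar (Pset q)) = pref (Qset q)
     \<and> pref (Qset q) = conc (lstar (Pset q)) (pref {q})"
proof -
  let ?P = "lstar (Pset q)"
  have Q: "Qset q = conc ?P {q} \<union> {[]}" using Qset_eq[OF assms(2)] .
  have sub: "conc ?P {q} \<union> {[]} \<subseteq> ?P"
    using lstar_append lstar_single[OF self_in_Pset[OF assms(2)]] lstar_Nil
    unfolding conc_def by blast
  have "pref ?P \<subseteq> conc ?P (pref {q})"
    using prefix_lstar_Pset unfolding pref_def by blast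
  moreover have "conc ?P (pref {q}) \<subseteq> pref (Qset q)"
    unfolding Q conc_def pref_def by fastforce
  moreover have "pref (Qset q) \<subseteq> pref ?P"
    using Q sub unfolding pref_def by blast
  ultimately show ?thesis using Q sub by blast
qed

end
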